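(* Under the setting and assumptions of the previous statement (symmetric positive definite $A_1,A_2$ with spectra in $[\alpha_1,\beta_1]$, $[\alpha_2,\beta_2]$; level-$h$ block-diagonal parts $A_i^{(h)}$, $h=0,\dots,\ell$; matrices $\widetilde X^{(\ell)},\delta\widetilde X^{(h)}$ with $\|R^{(\ell)}\|_F\le\epsilon\|B\|_F$ and $\|R^{(h)}\|_F\le\epsilon\|\widetilde\Xi^{(h)}\|_F$), with $\kappa=\frac{\beta_1+\beta_2}{\alpha_1+\alpha_2}$ and the additional constraint $\kappa\epsilon<\frac{2}{\ell}$, the matrix $\widetilde X:=\widetilde X^{(0)}=\widetilde X^{(\ell)}+\delta\widetilde X^{(\ell-1)}+\dots+\delta\widetilde X^{(0)}$ satisfies $$\|A_1\widetilde X+\widetilde XA_2-B\|_F\le(\ell+1)^2\kappa\epsilon\|B\|_F.$$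
   Context: For $i=1,2$, fix nested partitions of $\{1,\dots,n_i\}$ into contiguous index sets at levels $h=0,\dots,\ell$ (level $0$ trivial, each level obtained by splitting each set of the previous level into two contiguous parts). $A_i^{(h)}$ is the block-diagonal matrix keeping the entries of $A_i$ with row and column indices in the same level-$h$ set (so $A_i^{(0)}=A_i$). Given $B\in\mathbb R^{n_1\times n_2}$ and matrices $\widetilde X^{(\ell)}$, $\delta\widetilde X^{(h)}$ ($h=\ell-1,\dots,0$): $R^{(\ell)}:=A_1^{(\ell)}\widetilde X^{(\ell)}+\widetilde X^{(\ell)}A_2^{(\ell)}-B$; $\widetilde X^{(h+1)}:=\widetilde X^{(\ell)}+\delta\widetilde X^{(\ell-1)}+\dots+\delta\widetilde X^{(h+1)}$; $\widetilde\Xi^{(h)}:=-(A_1^{(h)}-A_1^{(h+1)})\widetilde X^{(h+1)}-\widetilde X^{(h+1)}(A_2^{(h)}-A_2^{(h+1)})$; $R^{(h)}:=A_1^{(h)}\delta\widetilde X^{(h)}+\delta\widetilde X^{(h)}A_2^{(h)}-\widetilde\Xi^{(h)}$. $\|\cdot\|_F$ is the Frobenius norm. *)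

theory Defs
  imports Complex_Main "Jordan_Normal_Form.Char_Poly"
begin

definition frob :: "real mat \<Rightarrow> real" where
  "frob M = sqrt (\<Sum>i<dim_row M. \<Sum>j<dim_col M. (M $$ (i,j))\<^sup>2)"

definition spd :: "nat \<Rightarrow> real mat \<Rightarrow> bool" where
  "spd n A \<longleftrightarrow> A \<in> carrier_mat n n \<and> A\<^sup>T = A \<and>
     (\<forall>v \<in> carrier_vec n. v \<noteq> 0\<^sub>v n \<longrightarrow> v \<bullet> (A *\<^sub>v v) > 0)"

definition spec_in :: "real mat \<Rightarrow> real \<Rightarrow> real \<Rightarrow> bool" where
  "spec_in A a b \<longleftrightarrow> (\<forall>k. eigenvalue A k \<longrightarrow> a \<le> k \<and> k \<le> b)"

text \<open>Nested partitions of the (0-based) index set {0..<n} into contiguous sets: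
  P h is the partition at level h, for h = 0..l.\<close>
definition nested_partition :: "nat \<Rightarrow> nat \<Rightarrow> (nat \<Rightarrow> nat set set) \<Rightarrow> bool" where
  "nested_partition n l P \<longleftrightarrow> P 0 = {{0..<n}} \<and>
     (\<forall>h<l. \<exists>m :: nat set \<Rightarrow> nat.
        (\<forall>S\<in>P h. \<exists>a b. S = {a..<b} \<and> a < m S \<and> m S < b) \<and>
        P (Suc h) = (\<Union>S\<in>P h. {{x\<in>S. x < m S}, {x\<in>S. m S \<le> x}}))"

definition blkdiag :: "(nat \<Rightarrow> nat set set) \<Rightarrow> nat \<Rightarrow> real mat \<Rightarrow> real mat" where
  "blkdiag P h A = mat (dim_row A) (dim_col A)
     (\<lambda>(i,j). if \<exists>S\<in>P h. i \<in> S \<and> j \<in> S then A $$ (i,j) else 0)"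

end

theory Submission
  imports Defs "HOL-Analysis.Function_Topology" "HOL-Analysis.L2_Norm"
begin

text \<open>Write \<open>X(h)\<close> for the partial sums, \<open>A\<^sub>i(h)\<close> for the level-\<open>h\<close> parts and \<open>\<rho>(h)\<close> for the
  Frobenius norm of the exact residual \<open>A\<^sub>1(h) X(h) + X(h) A\<^sub>2(h) - B\<close>. Since
  \<open>X(h) = \<delta>X(h) + X(h+1)\<close>, this residual is the computed \<open>R(h)\<close> plus the exact residual at level
  \<open>h+1\<close>, so \<open>\<rho>(h) \<le> \<epsilon> \<parallel>\<Xi>(h)\<parallel> + \<rho>(h+1)\<close>. Block-diagonal parts inherit the Rayleigh-quotient bounds
  \<open>[\<alpha>\<^sub>i, \<beta>\<^sub>i]\<close> of \<open>A\<^sub>i\<close>; hence the difference of two levels acts with norm at most \<open>\<beta>\<^sub>i\<close>, giving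
  \<open>\<parallel>\<Xi>(h)\<parallel> \<le> (\<beta>\<^sub>1 + \<beta>\<^sub>2) \<parallel>X(h+1)\<parallel>\<close>, while \<open>(\<alpha>\<^sub>1 + \<alpha>\<^sub>2) \<parallel>X\<parallel> \<le> \<parallel>A\<^sub>1(h+1) X + X A\<^sub>2(h+1)\<parallel>\<close> gives
  \<open>\<parallel>X(h+1)\<parallel> \<le> (\<rho>(h+1) + \<parallel>B\<parallel>) / (\<alpha>\<^sub>1 + \<alpha>\<^sub>2)\<close>. Therefore
  \<open>\<rho>(h) + \<parallel>B\<parallel> \<le> (1 + \<kappa>\<epsilon>) (\<rho>(h+1) + \<parallel>B\<parallel>)\<close>, and
  \<open>\<rho>(0) \<le> ((1 + \<kappa>\<epsilon>)^(l+1) - 1) \<parallel>B\<parallel> \<le> (l+1)\<^sup>2 \<kappa>\<epsilon> \<parallel>B\<parallel>\<close>, the last step because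
  \<open>(1 + x)^k \<le> 2k + 1\<close> whenever \<open>k x \<le> 2\<close>. The Rayleigh bounds follow from the spectral bounds,
  since a minimiser of the Rayleigh quotient on the unit sphere is an eigenvector.\<close>

section \<open>Quadratic forms and Rayleigh bounds\<close>

text \<open>Vectors of \<open>\<real>\<^sup>n\<close> are functions \<open>nat \<Rightarrow> real\<close>, of which only the values below \<open>n\<close> matter.\<close>

definition quad_form :: "nat \<Rightarrow> real mat \<Rightarrow> (nat \<Rightarrow> real) \<Rightarrow> real" where
  "quad_form n M f = (\<Sum>i<n. \<Sum>j<n. f i * M $$ (i,j) * f j)"

definition sq_norm :: "nat \<Rightarrow> (nat \<Rightarrow> real) \<Rightarrow> real" where
  "sq_norm n f = (\<Sum>i<n. (f i)\<^sup>2)"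

definition symmetric_mat :: "nat \<Rightarrow> real mat \<Rightarrow> bool" where
  "symmetric_mat n M \<longleftrightarrow> (\<forall>i<n. \<forall>j<n. M $$ (i,j) = M $$ (j,i))"

text \<open>Spectral bounds are expressed through the Rayleigh quotient, which unlike the spectrum
  passes to block-diagonal parts.\<close>

definition rayleigh_in :: "nat \<Rightarrow> real mat \<Rightarrow> real \<Rightarrow> real \<Rightarrow> bool" where
  "rayleigh_in n M \<alpha> \<beta> \<longleftrightarrow>
     (\<forall>f. \<alpha> * sq_norm n f \<le> quad_form n M f \<and> quad_form n M f \<le> \<beta> * sq_norm n f)"

lemma sq_norm_nonneg: "0 \<le> sq_norm n f"
  by (simp add: sq_norm_def sum_nonneg)

lemma sq_norm_eq_0_iff: "sq_norm n f = 0 \<longleftrightarrow> (\<forall>i<n. f i = 0)"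
  by (auto simp: sq_norm_def sum_nonneg_eq_0_iff)

lemma sq_norm_scale: "sq_norm n (\<lambda>i. c * f i) = c\<^sup>2 * sq_norm n f"
  by (simp add: sq_norm_def sum_distrib_left power_mult_distrib)

lemma quad_form_scale: "quad_form n M (\<lambda>i. c * f i) = c\<^sup>2 * quad_form n M f"
  by (simp add: quad_form_def sum_distrib_left power2_eq_square mult_ac)

lemma quad_form_minus:
  "M \<in> carrier_mat n n \<Longrightarrow> N \<in> carrier_mat n n \<Longrightarrow>
   quad_form n (M - N) f = quad_form n M f - quad_form n N f"
  by (simp add: quad_form_def sum_subtractf[symmetric] algebra_simps)

lemma quad_form_uminus: "M \<in> carrier_mat n n \<Longrightarrow> quad_form n (- M) f = - quad_form n M f"
  by (simp add: quad_form_def sum_negf[symmetric])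

lemma symmetric_mat_transpose: "A \<in> carrier_mat n n \<Longrightarrow> A\<^sup>T = A \<Longrightarrow> symmetric_mat n A"
  unfolding symmetric_mat_def by (metis carrier_matD index_transpose_mat(1))

lemma symmetric_mat_minus:
  "M \<in> carrier_mat n n \<Longrightarrow> N \<in> carrier_mat n n \<Longrightarrow> symmetric_mat n M \<Longrightarrow> symmetric_mat n N \<Longrightarrow>
   symmetric_mat n (M - N)"
  by (simp add: symmetric_mat_def)

lemma transpose_eq_if_symmetric_mat:
  "M \<in> carrier_mat n n \<Longrightarrow> symmetric_mat n M \<Longrightarrow> M\<^sup>T = M"
  by (rule eq_matI) (auto simp: symmetric_mat_def)

lemma bilinear_form_swap:
  assumes "symmetric_mat n M"
  shows "(\<Sum>i<n. \<Sum>j<n. u i * M $$ (i,j) * w j) = (\<Sum>i<n. \<Sum>j<n. w i * M $$ (i,j) * u j)"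
proof -
  have "(\<Sum>i<n. \<Sum>j<n. u i * M $$ (i,j) * w j) = (\<Sum>j<n. \<Sum>i<n. u i * M $$ (i,j) * w j)"
    by (rule sum.swap)
  also have "\<dots> = (\<Sum>i<n. \<Sum>j<n. w i * M $$ (i,j) * u j)"
    using assms by (intro sum.cong refl) (simp add: symmetric_mat_def mult_ac)
  finally show ?thesis .
qed

lemma quad_form_add_scaled:
  assumes "symmetric_mat n M"
  shows "quad_form n M (\<lambda>i. u i + t * w i) = quad_form n M u
           + 2 * t * (\<Sum>i<n. \<Sum>j<n. w i * M $$ (i,j) * u j) + t\<^sup>2 * quad_form n M w"
proof -
  have "quad_form n M (\<lambda>i. u i + t * w i) = quad_form n M u
      + t * (\<Sum>i<n. \<Sum>j<n. u i * M $$ (i,j) * w j)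
      + t * (\<Sum>i<n. \<Sum>j<n. w i * M $$ (i,j) * u j) + t\<^sup>2 * quad_form n M w"
    unfolding quad_form_def
    by (simp add: sum.distrib sum_distrib_left algebra_simps power2_eq_square)
  then show ?thesis using bilinear_form_swap[OF assms, of u w] by simp
qed

lemma sq_norm_add_scaled:
  "sq_norm n (\<lambda>i. u i + t * w i) = sq_norm n u + 2 * t * (\<Sum>i<n. u i * w i) + t\<^sup>2 * sq_norm n w"
  unfolding sq_norm_def
  by (simp add: sum.distrib sum_distrib_left algebra_simps power2_eq_square)

lemma linear_coeff_eq_0_if_nonneg:
  fixes G D :: real
  assumes nonneg: "\<And>t. 0 \<le> 2 * t * G + t\<^sup>2 * D" and "0 \<le> G"
  shows "G = 0"
proof (rule ccontr)
  assume "G \<noteq> 0"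
  with \<open>0 \<le> G\<close> have G: "0 < G" by simp
  define t where "t = - G / (\<bar>D\<bar> + 1)"
  have t: "t < 0" using G by (simp add: t_def)
  have "G * \<bar>D\<bar> / (\<bar>D\<bar> + 1) \<le> G" using G by (simp add: divide_le_eq)
  then have "2 * G + t * \<bar>D\<bar> > 0" using G by (simp add: t_def)
  then have "t * (2 * G + t * \<bar>D\<bar>) < 0" using t by (simp add: mult_neg_pos)
  moreover have "t\<^sup>2 * D \<le> t\<^sup>2 * \<bar>D\<bar>" by (simp add: mult_left_mono)
  ultimately have "2 * t * G + t\<^sup>2 * D < 0" by (simp add: algebra_simps power2_eq_square)
  with nonneg[of t] show False by simp
qed

lemma quad_form_min_on_sphere:
  assumes "0 < n"
  obtains u where "sq_norm n u = 1" "\<And>f. sq_norm n f = 1 \<Longrightarrow> quad_form n M u \<le> quad_form n M f"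
proof -
  let ?X = "product_topology (\<lambda>_. euclideanreal) {..<n}"
  define C where "C = {f \<in> topspace ?X. sq_norm n f \<in> {1}}"
  have "continuous_map ?X euclideanreal (sq_norm n)"
    unfolding sq_norm_def by (intro continuous_intros) auto
  then have closed: "closedin ?X C"
    unfolding C_def by (rule closedin_continuous_map_preimage) (simp add: closed_closedin[symmetric])
  have bounded: "C \<subseteq> PiE {..<n} (\<lambda>_. {-1..1})"
  proof
    fix f assume f: "f \<in> C"
    have "\<bar>f i\<bar> \<le> 1" if "i < n" for i
    proof -
      have "(f i)\<^sup>2 \<le> sq_norm n f"
        unfolding sq_norm_def by (rule member_le_sum) (use that in auto)
      then show ?thesis using f abs_square_le_1 by (auto simp: C_def)
    qed
    then show "f \<in> PiE {..<n} (\<lambda>_. {-1..1})" using f by (auto simp: C_def PiE_iff abs_le_iff)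
  qed
  have "compactin ?X (PiE {..<n} (\<lambda>_. {-1..1}))"
    by (subst compactin_PiE) auto
  from closed_compactin[OF this bounded closed] have compact: "compactin ?X C" .
  have "continuous_map ?X euclideanreal (quad_form n M)"
    unfolding quad_form_def by (intro continuous_intros) auto
  from image_compactin[OF compact this] have "compact (quad_form n M ` C)" by simp
  moreover have "restrict (\<lambda>i. if i = 0 then 1 else 0) {..<n} \<in> C"
    using assms by (simp add: C_def sq_norm_def if_distrib[of "\<lambda>x. x\<^sup>2"] cong: if_cong)
  then have "quad_form n M ` C \<noteq> {}" by blast
  ultimately obtain u where u: "u \<in> C" and min: "\<forall>f\<in>C. quad_form n M u \<le> quad_form n M f"
    using compact_attains_inf[of "quad_form n M ` C"] by auto
  show thesis
  proof (rule that)
    show "sq_norm n u = 1" using u by (simp add: C_def)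
    fix f assume "sq_norm n f = 1"
    then have "restrict f {..<n} \<in> C" by (simp add: C_def sq_norm_def)
    with min have "quad_form n M u \<le> quad_form n M (restrict f {..<n})" by blast
    then show "quad_form n M u \<le> quad_form n M f" by (simp add: quad_form_def)
  qed
qed

lemma rayleigh_minimizer:
  assumes "0 < n"
  obtains u where "sq_norm n u = 1" "\<And>f. quad_form n M u * sq_norm n f \<le> quad_form n M f"
proof -
  obtain u where u: "sq_norm n u = 1"
    and min: "\<And>f. sq_norm n f = 1 \<Longrightarrow> quad_form n M u \<le> quad_form n M f"
    using quad_form_min_on_sphere[OF assms] by blast
  have "quad_form n M u * sq_norm n f \<le> quad_form n M f" for f
  proof (cases "sq_norm n f = 0")
    case True
    then have "quad_form n M f = 0" by (simp add: sq_norm_eq_0_iff quad_form_def)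
    with True show ?thesis by simp
  next
    case False
    then have pos: "0 < sq_norm n f" using sq_norm_nonneg[of n f] by linarith
    define c where "c = 1 / sqrt (sq_norm n f)"
    have c2: "c\<^sup>2 * sq_norm n f = 1" using pos by (simp add: c_def power_divide)
    then have "quad_form n M u \<le> c\<^sup>2 * quad_form n M f"
      using min[of "\<lambda>i. c * f i"] by (simp add: sq_norm_scale quad_form_scale)
    then have "quad_form n M u * sq_norm n f \<le> c\<^sup>2 * sq_norm n f * quad_form n M f"
      using pos by (simp add: mult_right_mono mult_ac)
    with c2 show ?thesis by simp
  qed
  with u that show thesis by blast
qed

lemma rayleigh_minimizer_eigen:
  assumes sym: "symmetric_mat n M" and u: "sq_norm n u = 1"
    and min: "\<And>f. quad_form n M u * sq_norm n f \<le> quad_form n M f"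
    and "i < n"
  shows "(\<Sum>j<n. M $$ (i,j) * u j) = quad_form n M u * u i"
proof -
  define \<mu> where "\<mu> = quad_form n M u"
  define w where "w i = (\<Sum>j<n. M $$ (i,j) * u j) - \<mu> * u i" for i
  have cross: "(\<Sum>i<n. \<Sum>j<n. w i * M $$ (i,j) * u j) = sq_norm n w + \<mu> * (\<Sum>i<n. u i * w i)"
  proof -
    have Mu: "(\<Sum>j<n. M $$ (i,j) * u j) = w i + \<mu> * u i" for i
      by (simp add: w_def)
    have "(\<Sum>i<n. \<Sum>j<n. w i * M $$ (i,j) * u j) = (\<Sum>i<n. w i * (w i + \<mu> * u i))"
      by (simp add: Mu[symmetric] sum_distrib_left mult.assoc)
    then show ?thesis
      by (simp add: sq_norm_def algebra_simps power2_eq_square sum.distrib sum_distrib_left)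
  qed
  text \<open>Perturbing the minimizer along the residual \<open>w\<close> shows that \<open>w\<close> vanishes.\<close>
  have "0 \<le> 2 * t * sq_norm n w + t\<^sup>2 * (quad_form n M w - \<mu> * sq_norm n w)" for t
    using min[of "\<lambda>i. u i + t * w i"] u cross
    by (simp add: quad_form_add_scaled[OF sym] sq_norm_add_scaled \<mu>_def algebra_simps)
  then have "sq_norm n w = 0"
    by (rule linear_coeff_eq_0_if_nonneg[OF _ sq_norm_nonneg])
  then show ?thesis using \<open>i < n\<close> by (simp add: sq_norm_eq_0_iff w_def \<mu>_def)
qed

lemma eigenvalue_of_eigenfunction:
  fixes A :: "real mat"
  assumes A: "A \<in> carrier_mat n n"
    and eq: "\<And>i. i < n \<Longrightarrow> (\<Sum>j<n. A $$ (i,j) * u j) = k * u i" and "\<exists>i<n. u i \<noteq> 0"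
  shows "eigenvalue A k"
proof -
  have "A *\<^sub>v vec n u = k \<cdot>\<^sub>v vec n u"
    using A eq by (intro eq_vecI) (auto simp: scalar_prod_def atLeast0LessThan)
  moreover have "vec n u \<noteq> 0\<^sub>v n" using \<open>\<exists>i<n. u i \<noteq> 0\<close> by (auto simp: vec_eq_iff)
  ultimately show ?thesis
    using A by (auto simp: eigenvalue_def eigenvector_def intro!: exI[of _ "vec n u"])
qed

lemma rayleigh_lower_bound:
  assumes A: "A \<in> carrier_mat n n" and sym: "symmetric_mat n A"
    and ev: "\<And>k. eigenvalue A k \<Longrightarrow> \<alpha> \<le> k"
  shows "\<alpha> * sq_norm n f \<le> quad_form n A f"
proof (cases "n = 0")
  case True
  then show ?thesis by (simp add: sq_norm_def quad_form_def)
next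
  case False
  then obtain u where u: "sq_norm n u = 1"
    and min: "\<And>f. quad_form n A u * sq_norm n f \<le> quad_form n A f"
    using rayleigh_minimizer by blast
  have "\<exists>i<n. u i \<noteq> 0" using u sq_norm_eq_0_iff[of n u] by auto
  with rayleigh_minimizer_eigen[OF sym u min] have "eigenvalue A (quad_form n A u)"
    by (intro eigenvalue_of_eigenfunction[OF A])
  then have "\<alpha> * sq_norm n f \<le> quad_form n A u * sq_norm n f"
    by (intro mult_right_mono ev sq_norm_nonneg)
  also have "\<dots> \<le> quad_form n A f" by (rule min)
  finally show ?thesis .
qed

lemma eigenvalue_uminus:
  assumes "A \<in> carrier_mat n n" and "eigenvalue (- A) k"
  shows "eigenvalue A (- k)"
proof -
  obtain v where v: "v \<in> carrier_vec n" "v \<noteq> 0\<^sub>v n" and "- (A *\<^sub>v v) = k \<cdot>\<^sub>v v"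
    using assms by (auto simp: eigenvalue_def eigenvector_def)
  then have "A *\<^sub>v v = - (k \<cdot>\<^sub>v v)" by (metis uminus_uminus_vec)
  also have "\<dots> = (- k) \<cdot>\<^sub>v v" by (rule eq_vecI) auto
  finally have "A *\<^sub>v v = (- k) \<cdot>\<^sub>v v" .
  with v assms(1) show ?thesis by (auto simp: eigenvalue_def eigenvector_def)
qed

lemma spec_in_imp_rayleigh_in:
  assumes A: "A \<in> carrier_mat n n" and sym: "symmetric_mat n A" and spec: "spec_in A \<alpha> \<beta>"
  shows "rayleigh_in n A \<alpha> \<beta>"
proof -
  have "\<alpha> * sq_norm n f \<le> quad_form n A f" for f
    using spec by (intro rayleigh_lower_bound[OF A sym]) (simp add: spec_in_def)
  moreover have "- \<beta> * sq_norm n f \<le> quad_form n (- A) f" for f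
  proof (rule rayleigh_lower_bound)
    show "symmetric_mat n (- A)" using A sym by (simp add: symmetric_mat_def)
    show "- \<beta> \<le> k" if "eigenvalue (- A) k" for k
      using spec eigenvalue_uminus[OF A that] by (force simp: spec_in_def)
  qed (use A in simp)
  ultimately show ?thesis using A by (simp add: rayleigh_in_def quad_form_uminus)
qed

lemma rayleigh_in_le: "0 < n \<Longrightarrow> rayleigh_in n M \<alpha> \<beta> \<Longrightarrow> \<alpha> \<le> \<beta>"
  unfolding rayleigh_in_def
  by (drule spec[of _ "\<lambda>i. if i = 0 then 1 else 0"])
    (simp add: sq_norm_def if_distrib[of "\<lambda>x. x\<^sup>2"] cong: if_cong)

lemma rayleigh_in_diff:
  assumes "M \<in> carrier_mat n n" "N \<in> carrier_mat n n" "rayleigh_in n M \<alpha> \<beta>" "rayleigh_in n N \<alpha> \<beta>"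
  shows "rayleigh_in n (M - N) (- (\<beta> - \<alpha>)) (\<beta> - \<alpha>)"
  unfolding rayleigh_in_def
proof
  fix f
  have "\<alpha> * sq_norm n f \<le> quad_form n M f" "quad_form n M f \<le> \<beta> * sq_norm n f"
    "\<alpha> * sq_norm n f \<le> quad_form n N f" "quad_form n N f \<le> \<beta> * sq_norm n f"
    using assms(3,4) by (auto simp: rayleigh_in_def)
  then show "- (\<beta> - \<alpha>) * sq_norm n f \<le> quad_form n (M - N) f
      \<and> quad_form n (M - N) f \<le> (\<beta> - \<alpha>) * sq_norm n f"
    by (simp add: quad_form_minus[OF assms(1,2)] left_diff_distrib)
qed

lemma sq_norm_mat_apply_le:
  assumes sym: "symmetric_mat n M" and bd: "rayleigh_in n M (- c) c"
  shows "sq_norm n (\<lambda>i. \<Sum>j<n. M $$ (i,j) * f j) \<le> c\<^sup>2 * sq_norm n f"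
proof -
  define g where "g = (\<lambda>i. \<Sum>j<n. M $$ (i,j) * f j)"
  have cross: "(\<Sum>i<n. \<Sum>j<n. g i * M $$ (i,j) * f j) = sq_norm n g"
    by (simp add: g_def sq_norm_def sum_distrib_left mult_ac power2_eq_square)
  text \<open>Polarization: the form at \<open>f \<plusminus> t g\<close> differs by \<open>4 t |g|\<^sup>2\<close>; then take \<open>t = 1 / c\<close>.\<close>
  have key: "2 * t * sq_norm n g \<le> c * sq_norm n f + c * t\<^sup>2 * sq_norm n g" for t
  proof -
    have "4 * t * sq_norm n g
        = quad_form n M (\<lambda>i. f i + t * g i) - quad_form n M (\<lambda>i. f i + (- t) * g i)"
      using quad_form_add_scaled[OF sym, of f t g] quad_form_add_scaled[OF sym, of f "- t" g] cross
      by (simp add: algebra_simps)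
    also have "\<dots> \<le> c * sq_norm n (\<lambda>i. f i + t * g i) + c * sq_norm n (\<lambda>i. f i + (- t) * g i)"
      using bd[unfolded rayleigh_in_def, rule_format, of "\<lambda>i. f i + t * g i"]
        bd[unfolded rayleigh_in_def, rule_format, of "\<lambda>i. f i + (- t) * g i"]
      by linarith
    also have "\<dots> = c * (sq_norm n (\<lambda>i. f i + t * g i) + sq_norm n (\<lambda>i. f i + (- t) * g i))"
      by (simp only: distrib_left)
    also have "sq_norm n (\<lambda>i. f i + t * g i) + sq_norm n (\<lambda>i. f i + (- t) * g i)
        = 2 * (sq_norm n f + t\<^sup>2 * sq_norm n g)"
      using sq_norm_add_scaled[of n f t g] sq_norm_add_scaled[of n f "- t" g] by simp
    finally show ?thesis by (simp add: algebra_simps)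
  qed
  have "sq_norm n g \<le> c\<^sup>2 * sq_norm n f"
  proof (cases "sq_norm n g = 0")
    case True
    then show ?thesis by (simp add: sq_norm_nonneg)
  next
    case False
    then have g: "0 < sq_norm n g" using sq_norm_nonneg[of n g] by linarith
    have "2 * sq_norm n g \<le> c * (sq_norm n f + sq_norm n g)"
      using key[of 1] by (simp add: algebra_simps)
    then have "0 < c * (sq_norm n f + sq_norm n g)" using g by linarith
    then have c: "0 < c" using g sq_norm_nonneg[of n f] by (simp add: zero_less_mult_iff)
    have "2 * (1 / c) * sq_norm n g \<le> c * sq_norm n f + c * (1 / c)\<^sup>2 * sq_norm n g"
      by (rule key)
    then have "sq_norm n g / c \<le> c * sq_norm n f"
      using c by (simp add: power2_eq_square)
    then show ?thesis using c by (simp add: divide_le_eq power2_eq_square mult_ac)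
  qed
  then show ?thesis by (simp add: g_def)
qed

section \<open>Block-diagonal parts\<close>

definition is_partition :: "nat \<Rightarrow> nat set set \<Rightarrow> bool" where
  "is_partition n Q \<longleftrightarrow> finite Q \<and> (\<forall>S\<in>Q. S \<subseteq> {..<n}) \<and> (\<forall>i<n. \<exists>S\<in>Q. i \<in> S) \<and>
     (\<forall>S\<in>Q. \<forall>T\<in>Q. S \<noteq> T \<longrightarrow> S \<inter> T = {})"

lemma is_partition_split:
  assumes Q: "is_partition n Q"
  shows "is_partition n (\<Union>S\<in>Q. {{x\<in>S. x < m S}, {x\<in>S. m S \<le> x}})"
    (is "is_partition n ?Q'")
proof -
  have "finite ?Q'" using Q by (simp add: is_partition_def)
  moreover have "\<forall>S'\<in>?Q'. S' \<subseteq> {..<n}" using Q unfolding is_partition_def by blast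
  moreover have "\<forall>i<n. \<exists>S'\<in>?Q'. i \<in> S'"
  proof (intro allI impI)
    fix i assume "i < n"
    then obtain S where "S \<in> Q" "i \<in> S" using Q unfolding is_partition_def by blast
    then show "\<exists>S'\<in>?Q'. i \<in> S'"
      by (intro bexI[of _ "if i < m S then {x\<in>S. x < m S} else {x\<in>S. m S \<le> x}"]) auto
  qed
  moreover have "\<forall>S'\<in>?Q'. \<forall>T'\<in>?Q'. S' \<noteq> T' \<longrightarrow> S' \<inter> T' = {}"
  proof (intro ballI impI)
    fix S' T' assume "S' \<in> ?Q'" "T' \<in> ?Q'" "S' \<noteq> T'"
    then obtain S T where S: "S \<in> Q" "S' = {x\<in>S. x < m S} \<or> S' = {x\<in>S. m S \<le> x}"
      and T: "T \<in> Q" "T' = {x\<in>T. x < m T} \<or> T' = {x\<in>T. m T \<le> x}"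
      by blast
    show "S' \<inter> T' = {}"
    proof (cases "S = T")
      case True
      have "{x\<in>S. x < m S} \<inter> {x\<in>S. m S \<le> x} = {}" by auto
      with S(2) T(2) True \<open>S' \<noteq> T'\<close> show ?thesis by (elim disjE) auto
    next
      case False
      with Q S(1) T(1) have "S \<inter> T = {}" unfolding is_partition_def by blast
      moreover have "S' \<subseteq> S" "T' \<subseteq> T" using S(2) T(2) by auto
      ultimately show ?thesis by blast
    qed
  qed
  ultimately show ?thesis unfolding is_partition_def by (intro conjI)
qed

lemma nested_partition_is_partition:
  assumes P: "nested_partition n l P"
  shows "h \<le> l \<Longrightarrow> is_partition n (P h)"
proof (induction h)
  case 0
  from P show ?case by (auto simp: nested_partition_def is_partition_def)
next
  case (Suc h)
  then have "h < l" by simp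
  from nested_partition_def[THEN iffD1, OF P, THEN conjunct2, rule_format, OF this]
  obtain m where "P (Suc h) = (\<Union>S\<in>P h. {{x\<in>S. x < m S}, {x\<in>S. m S \<le> x}})"
    by blast
  with Suc show ?case by (simp add: is_partition_split)
qed

lemma sum_partition_blocks:
  assumes Q: "is_partition n Q" and "i < n"
  shows "(\<Sum>S\<in>Q. if i \<in> S \<and> j \<in> S then c else 0) = (if \<exists>S\<in>Q. i \<in> S \<and> j \<in> S then c else (0::real))"
proof -
  obtain S0 where S0: "S0 \<in> Q" "i \<in> S0" using Q \<open>i < n\<close> by (auto simp: is_partition_def)
  have block: "i \<in> S \<and> j \<in> S \<longleftrightarrow> S = S0 \<and> j \<in> S0" if "S \<in> Q" for S
    using Q S0 that unfolding is_partition_def by blast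
  have "(\<Sum>S\<in>Q. if i \<in> S \<and> j \<in> S then c else 0) = (\<Sum>S\<in>Q. if S = S0 then (if j \<in> S0 then c else 0) else 0)"
    by (rule sum.cong) (auto simp: block)
  also have "\<dots> = (if j \<in> S0 then c else 0)" using Q S0 by (simp add: is_partition_def)
  moreover have "(\<exists>S\<in>Q. i \<in> S \<and> j \<in> S) \<longleftrightarrow> j \<in> S0" using block S0 by blast
  ultimately show ?thesis by simp
qed

lemma blkdiag_carrier: "A \<in> carrier_mat n n \<Longrightarrow> blkdiag P h A \<in> carrier_mat n n"
  by (simp add: blkdiag_def)

lemma blkdiag_index:
  "A \<in> carrier_mat n n \<Longrightarrow> i < n \<Longrightarrow> j < n \<Longrightarrow>
   blkdiag P h A $$ (i,j) = (if \<exists>S\<in>P h. i \<in> S \<and> j \<in> S then A $$ (i,j) else 0)"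
  by (simp add: blkdiag_def)

lemma blkdiag_level_0:
  assumes "nested_partition n l P" "A \<in> carrier_mat n n"
  shows "blkdiag P 0 A = A"
proof -
  have "P 0 = {{0..<n}}" using assms(1) by (simp add: nested_partition_def)
  with assms(2) show ?thesis by (intro eq_matI) (auto simp: blkdiag_def)
qed

lemma symmetric_mat_blkdiag:
  assumes A: "A \<in> carrier_mat n n" and sym: "symmetric_mat n A"
  shows "symmetric_mat n (blkdiag P h A)"
  unfolding symmetric_mat_def
proof (intro allI impI)
  fix i j assume "i < n" "j < n"
  moreover from this have "A $$ (i,j) = A $$ (j,i)" using sym unfolding symmetric_mat_def by blast
  ultimately show "blkdiag P h A $$ (i, j) = blkdiag P h A $$ (j, i)"
    by (auto simp: blkdiag_index[OF A])
qed

lemma quad_form_blkdiag: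
  assumes Q: "is_partition n (P h)" and A: "A \<in> carrier_mat n n"
  shows "quad_form n (blkdiag P h A) f = (\<Sum>S\<in>P h. quad_form n A (\<lambda>i. if i \<in> S then f i else 0))"
proof -
  have block: "quad_form n A (\<lambda>i. if i \<in> S then f i else 0)
      = (\<Sum>i<n. \<Sum>j<n. if i \<in> S \<and> j \<in> S then f i * A $$ (i,j) * f j else 0)" for S
    unfolding quad_form_def by (intro sum.cong refl) auto
  have "(\<Sum>S\<in>P h. quad_form n A (\<lambda>i. if i \<in> S then f i else 0))
      = (\<Sum>i<n. \<Sum>S\<in>P h. \<Sum>j<n. if i \<in> S \<and> j \<in> S then f i * A $$ (i,j) * f j else 0)"
    unfolding block by (rule sum.swap)
  also have "\<dots> = (\<Sum>i<n. \<Sum>j<n. \<Sum>S\<in>P h. if i \<in> S \<and> j \<in> S then f i * A $$ (i,j) * f j else 0)"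
    by (intro sum.cong refl) (rule sum.swap)
  also have "\<dots> = quad_form n (blkdiag P h A) f"
    unfolding quad_form_def using A by (intro sum.cong refl) (simp add: sum_partition_blocks[OF Q] blkdiag_index; blast)
  finally show ?thesis by simp
qed

lemma sq_norm_partition:
  assumes Q: "is_partition n Q"
  shows "sq_norm n f = (\<Sum>S\<in>Q. sq_norm n (\<lambda>i. if i \<in> S then f i else 0))"
proof -
  have "(\<Sum>S\<in>Q. sq_norm n (\<lambda>i. if i \<in> S then f i else 0))
      = (\<Sum>i<n. \<Sum>S\<in>Q. if i \<in> S \<and> i \<in> S then (f i)\<^sup>2 else 0)"
    unfolding sq_norm_def by (subst sum.swap) (auto intro!: sum.cong)
  also have "\<dots> = sq_norm n f"
    unfolding sq_norm_def
  proof (intro sum.cong refl)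
    fix i assume "i \<in> {..<n}"
    then have "i < n" by simp
    from sum_partition_blocks[OF Q this, of i] Q \<open>i < n\<close>
    show "(\<Sum>S\<in>Q. if i \<in> S \<and> i \<in> S then (f i)\<^sup>2 else 0) = (f i)\<^sup>2"
      by (auto simp: is_partition_def)
  qed
  finally show ?thesis by simp
qed

lemma rayleigh_in_blkdiag:
  assumes Q: "is_partition n (P h)" and A: "A \<in> carrier_mat n n" and bd: "rayleigh_in n A \<alpha> \<beta>"
  shows "rayleigh_in n (blkdiag P h A) \<alpha> \<beta>"
  unfolding rayleigh_in_def
proof
  fix f :: "nat \<Rightarrow> real"
  let ?f = "\<lambda>S i. if i \<in> S then f i else 0"
  have "\<alpha> * sq_norm n f = (\<Sum>S\<in>P h. \<alpha> * sq_norm n (?f S))"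
    by (subst sq_norm_partition[OF Q]) (simp add: sum_distrib_left)
  also have "\<dots> \<le> quad_form n (blkdiag P h A) f"
    using bd unfolding quad_form_blkdiag[where P=P and h=h, OF Q A] rayleigh_in_def by (intro sum_mono) blast
  finally have lower: "\<alpha> * sq_norm n f \<le> quad_form n (blkdiag P h A) f" .
  have "quad_form n (blkdiag P h A) f \<le> (\<Sum>S\<in>P h. \<beta> * sq_norm n (?f S))"
    using bd unfolding quad_form_blkdiag[where P=P and h=h, OF Q A] rayleigh_in_def by (intro sum_mono) blast
  also have "\<dots> = \<beta> * sq_norm n f"
    by (subst (2) sq_norm_partition[OF Q]) (simp add: sum_distrib_left)
  finally show "\<alpha> * sq_norm n f \<le> quad_form n (blkdiag P h A) f
      \<and> quad_form n (blkdiag P h A) f \<le> \<beta> * sq_norm n f" using lower by simp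
qed

definition sym_rayleigh_in :: "nat \<Rightarrow> real mat \<Rightarrow> real \<Rightarrow> real \<Rightarrow> bool" where
  "sym_rayleigh_in n M \<alpha> \<beta> \<longleftrightarrow>
     M \<in> carrier_mat n n \<and> symmetric_mat n M \<and> rayleigh_in n M \<alpha> \<beta>"

lemma sym_rayleigh_in_diff:
  assumes "sym_rayleigh_in n M \<alpha> \<beta>" "sym_rayleigh_in n N \<alpha> \<beta>"
  shows "sym_rayleigh_in n (M - N) (- (\<beta> - \<alpha>)) (\<beta> - \<alpha>)"
proof -
  from assms have "M \<in> carrier_mat n n" "N \<in> carrier_mat n n" "symmetric_mat n M" "symmetric_mat n N"
    "rayleigh_in n M \<alpha> \<beta>" "rayleigh_in n N \<alpha> \<beta>"
    by (auto simp: sym_rayleigh_in_def)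
  then show ?thesis
    unfolding sym_rayleigh_in_def by (intro conjI minus_carrier_mat symmetric_mat_minus rayleigh_in_diff)
qed

lemma sym_rayleigh_in_blkdiag:
  assumes "nested_partition n l P" "h \<le> l" "spd n A" "spec_in A \<alpha> \<beta>"
  shows "sym_rayleigh_in n (blkdiag P h A) \<alpha> \<beta>"
proof -
  have A: "A \<in> carrier_mat n n" and sym: "symmetric_mat n A"
    using assms(3) by (auto simp: spd_def intro: symmetric_mat_transpose)
  show ?thesis
    unfolding sym_rayleigh_in_def
    using blkdiag_carrier[OF A] symmetric_mat_blkdiag[OF A sym]
      rayleigh_in_blkdiag[where P=P and h=h, OF nested_partition_is_partition[OF assms(1,2)] A
        spec_in_imp_rayleigh_in[OF A sym assms(4)]]
    by blast
qed

section \<open>Frobenius norm estimates\<close>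

lemma frob_nonneg: "0 \<le> frob M"
  by (simp add: frob_def sum_nonneg)

lemma frob_empty: "M \<in> carrier_mat n1 n2 \<Longrightarrow> n1 = 0 \<or> n2 = 0 \<Longrightarrow> frob M = 0"
  by (auto simp: frob_def)

lemma frob_sq: "(frob M)\<^sup>2 = (\<Sum>i<dim_row M. \<Sum>j<dim_col M. (M $$ (i,j))\<^sup>2)"
  by (simp add: frob_def sum_nonneg)

lemma frob_L2_set: "frob M = L2_set (\<lambda>p. M $$ p) ({..<dim_row M} \<times> {..<dim_col M})"
  by (simp add: frob_def L2_set_def sum.cartesian_product split_def)

lemma frob_entrywise_triangle:
  assumes "X \<in> carrier_mat n1 n2" "Y \<in> carrier_mat n1 n2" "Z \<in> carrier_mat n1 n2"
    and entries: "\<And>i j. i < n1 \<Longrightarrow> j < n2 \<Longrightarrow> \<bar>Z $$ (i,j)\<bar> \<le> \<bar>X $$ (i,j)\<bar> + \<bar>Y $$ (i,j)\<bar>"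
  shows "frob Z \<le> frob X + frob Y"
proof -
  let ?I = "{..<n1} \<times> {..<n2}"
  have abs: "L2_set (\<lambda>p. \<bar>f p\<bar>) A = L2_set f A" for f :: "nat \<times> nat \<Rightarrow> real" and A
    by (simp add: L2_set_def)
  have "frob Z = L2_set (\<lambda>p. \<bar>Z $$ p\<bar>) ?I" using assms(3) by (simp add: frob_L2_set abs)
  also have "\<dots> \<le> L2_set (\<lambda>p. \<bar>X $$ p\<bar> + \<bar>Y $$ p\<bar>) ?I"
    by (rule L2_set_mono) (auto intro: entries)
  also have "\<dots> \<le> L2_set (\<lambda>p. \<bar>X $$ p\<bar>) ?I + L2_set (\<lambda>p. \<bar>Y $$ p\<bar>) ?I"
    by (rule L2_set_triangle_ineq)
  also have "\<dots> = frob X + frob Y" using assms(1,2) by (simp add: frob_L2_set abs)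
  finally show ?thesis .
qed

lemma frob_add_le:
  "X \<in> carrier_mat n1 n2 \<Longrightarrow> Y \<in> carrier_mat n1 n2 \<Longrightarrow> frob (X + Y) \<le> frob X + frob Y"
  by (rule frob_entrywise_triangle[of X n1 n2 Y]) auto

lemma frob_diff_le:
  "X \<in> carrier_mat n1 n2 \<Longrightarrow> Y \<in> carrier_mat n1 n2 \<Longrightarrow> frob (X - Y) \<le> frob X + frob Y"
  by (rule frob_entrywise_triangle[of X n1 n2 Y]) auto

lemma frob_le_diff_add:
  "X \<in> carrier_mat n1 n2 \<Longrightarrow> Y \<in> carrier_mat n1 n2 \<Longrightarrow> frob X \<le> frob (X - Y) + frob Y"
  by (rule frob_entrywise_triangle[of "X - Y" n1 n2 Y]) auto

lemma frob_uminus: "frob (- M) = frob M"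
  by (simp add: frob_def)

lemma frob_transpose: "frob (M\<^sup>T) = frob M"
  unfolding frob_def by (subst sum.swap) simp

lemma frob_le_if_sq_le:
  assumes "(frob Z)\<^sup>2 \<le> c\<^sup>2 * (frob X)\<^sup>2" and "0 \<le> c"
  shows "frob Z \<le> c * frob X"
proof (rule power2_le_imp_le)
  show "(frob Z)\<^sup>2 \<le> (c * frob X)\<^sup>2" using assms(1) by (simp add: power_mult_distrib)
  show "0 \<le> c * frob X" using assms(2) frob_nonneg[of X] by simp
qed

lemma index_mult_mat_sum:
  "A \<in> carrier_mat n1 k \<Longrightarrow> B \<in> carrier_mat k n2 \<Longrightarrow> i < n1 \<Longrightarrow> j < n2 \<Longrightarrow>
   (A * B) $$ (i,j) = (\<Sum>l<k. A $$ (i,l) * B $$ (l,j))"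
  by (auto simp: scalar_prod_def atLeast0LessThan intro!: sum.cong)

lemma frob_sq_cols:
  assumes "X \<in> carrier_mat n1 n2"
  shows "(frob X)\<^sup>2 = (\<Sum>j<n2. sq_norm n1 (\<lambda>i. X $$ (i,j)))"
proof -
  have "(frob X)\<^sup>2 = (\<Sum>i<n1. \<Sum>j<n2. (X $$ (i,j))\<^sup>2)" using assms by (simp add: frob_sq)
  also have "\<dots> = (\<Sum>j<n2. \<Sum>i<n1. (X $$ (i,j))\<^sup>2)" by (rule sum.swap)
  finally show ?thesis by (simp add: sq_norm_def)
qed

lemma frob_sq_rows:
  "X \<in> carrier_mat n1 n2 \<Longrightarrow> (frob X)\<^sup>2 = (\<Sum>i<n1. sq_norm n2 (\<lambda>j. X $$ (i,j)))"
  by (simp add: frob_sq sq_norm_def)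

lemma frob_mult_left_le:
  assumes "sym_rayleigh_in n1 M (- c) c" and X: "X \<in> carrier_mat n1 n2"
  shows "frob (M * X) \<le> c * frob X"
proof -
  from assms have M: "M \<in> carrier_mat n1 n1" and sym: "symmetric_mat n1 M"
    and bd: "rayleigh_in n1 M (- c) c" by (auto simp: sym_rayleigh_in_def)
  have "(frob (M * X))\<^sup>2 = (\<Sum>j<n2. sq_norm n1 (\<lambda>i. (M * X) $$ (i,j)))"
    using M X by (intro frob_sq_cols) simp
  also have "\<dots> = (\<Sum>j<n2. sq_norm n1 (\<lambda>i. \<Sum>k<n1. M $$ (i,k) * X $$ (k,j)))"
    unfolding sq_norm_def by (simp add: index_mult_mat_sum[OF M X] del: index_mult_mat(1))
  also have "\<dots> \<le> (\<Sum>j<n2. c\<^sup>2 * sq_norm n1 (\<lambda>k. X $$ (k,j)))"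
    by (intro sum_mono sq_norm_mat_apply_le[OF sym bd])
  also have "\<dots> = c\<^sup>2 * (frob X)\<^sup>2"
    using X by (simp add: frob_sq_cols sum_distrib_left)
  finally have sq: "(frob (M * X))\<^sup>2 \<le> c\<^sup>2 * (frob X)\<^sup>2" .
  show ?thesis
  proof (cases "n1 = 0")
    case True
    then show ?thesis using M X by (simp add: frob_empty[of _ n1 n2])
  next
    case False
    then show ?thesis using sq rayleigh_in_le[OF _ bd] by (intro frob_le_if_sq_le) auto
  qed
qed

lemma frob_mult_right_le:
  assumes M: "sym_rayleigh_in n2 M (- c) c" and X: "X \<in> carrier_mat n1 n2"
  shows "frob (X * M) \<le> c * frob X"
proof -
  have "(X * M)\<^sup>T = M * X\<^sup>T"
    using M X transpose_mult[OF X] transpose_eq_if_symmetric_mat by (auto simp: sym_rayleigh_in_def)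
  then have "frob (X * M) = frob (M * X\<^sup>T)" by (metis frob_transpose)
  also have "\<dots> \<le> c * frob X"
    using frob_mult_left_le[OF M, of "X\<^sup>T" n1] X by (simp add: frob_transpose)
  finally show ?thesis .
qed

lemma frob_inner_le:
  assumes "X \<in> carrier_mat n1 n2" "Y \<in> carrier_mat n1 n2"
  shows "(\<Sum>i<n1. \<Sum>j<n2. X $$ (i,j) * Y $$ (i,j)) \<le> frob X * frob Y"
proof -
  let ?I = "{..<n1} \<times> {..<n2}"
  have "(\<Sum>i<n1. \<Sum>j<n2. X $$ (i,j) * Y $$ (i,j)) \<le> (\<Sum>p\<in>?I. \<bar>X $$ p\<bar> * \<bar>Y $$ p\<bar>)"
    by (simp add: sum.cartesian_product split_def sum_mono abs_mult[symmetric])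
  also have "\<dots> \<le> L2_set (\<lambda>p. X $$ p) ?I * L2_set (\<lambda>p. Y $$ p) ?I"
    by (rule L2_set_mult_ineq)
  finally show ?thesis using assms by (simp add: frob_L2_set)
qed

lemma inner_mult_left:
  assumes A: "A \<in> carrier_mat n1 n1" and X: "X \<in> carrier_mat n1 n2"
  shows "(\<Sum>i<n1. \<Sum>j<n2. X $$ (i,j) * (A * X) $$ (i,j)) = (\<Sum>j<n2. quad_form n1 A (\<lambda>i. X $$ (i,j)))"
proof -
  have "(\<Sum>i<n1. \<Sum>j<n2. X $$ (i,j) * (A * X) $$ (i,j))
      = (\<Sum>i<n1. \<Sum>j<n2. \<Sum>k<n1. X $$ (i,j) * A $$ (i,k) * X $$ (k,j))"
    by (intro sum.cong refl)
      (simp add: index_mult_mat_sum[OF A X] sum_distrib_left mult.assoc del: index_mult_mat(1))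
  also have "\<dots> = (\<Sum>j<n2. \<Sum>i<n1. \<Sum>k<n1. X $$ (i,j) * A $$ (i,k) * X $$ (k,j))"
    by (rule sum.swap)
  finally show ?thesis by (simp only: quad_form_def)
qed

lemma inner_mult_right:
  assumes A: "A \<in> carrier_mat n2 n2" and X: "X \<in> carrier_mat n1 n2"
  shows "(\<Sum>i<n1. \<Sum>j<n2. X $$ (i,j) * (X * A) $$ (i,j)) = (\<Sum>i<n1. quad_form n2 A (\<lambda>j. X $$ (i,j)))"
  unfolding quad_form_def
proof (rule sum.cong[OF refl])
  fix i assume "i \<in> {..<n1}"
  then have "(\<Sum>j<n2. X $$ (i,j) * (X * A) $$ (i,j)) = (\<Sum>j<n2. \<Sum>k<n2. X $$ (i,k) * A $$ (k,j) * X $$ (i,j))"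
    by (simp add: index_mult_mat_sum[OF X A] sum_distrib_left mult_ac del: index_mult_mat(1))
  also have "\<dots> = (\<Sum>k<n2. \<Sum>j<n2. X $$ (i,k) * A $$ (k,j) * X $$ (i,j))"
    by (rule sum.swap)
  finally show "(\<Sum>j<n2. X $$ (i,j) * (X * A) $$ (i,j)) = (\<Sum>k<n2. \<Sum>j<n2. X $$ (i,k) * A $$ (k,j) * X $$ (i,j))" .
qed

text \<open>The inner product of \<open>X\<close> with \<open>A\<^sub>1 X + X A\<^sub>2\<close> is a sum of quadratic forms of \<open>A\<^sub>1\<close> over
  the columns and of \<open>A\<^sub>2\<close> over the rows of \<open>X\<close>; Cauchy-Schwarz then gives the bound.\<close>

lemma frob_sylvester_lower:
  assumes A1: "A1 \<in> carrier_mat n1 n1" and A2: "A2 \<in> carrier_mat n2 n2" and X: "X \<in> carrier_mat n1 n2"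
    and bd1: "rayleigh_in n1 A1 \<alpha>1 \<beta>1" and bd2: "rayleigh_in n2 A2 \<alpha>2 \<beta>2"
  shows "(\<alpha>1 + \<alpha>2) * frob X \<le> frob (A1 * X + X * A2)"
proof -
  let ?Y = "A1 * X + X * A2"
  have cols: "\<alpha>1 * (frob X)\<^sup>2 \<le> (\<Sum>j<n2. quad_form n1 A1 (\<lambda>i. X $$ (i,j)))"
  proof -
    have "\<alpha>1 * (frob X)\<^sup>2 = (\<Sum>j<n2. \<alpha>1 * sq_norm n1 (\<lambda>i. X $$ (i,j)))"
      using X by (simp add: frob_sq_cols sum_distrib_left)
    also have "\<dots> \<le> (\<Sum>j<n2. quad_form n1 A1 (\<lambda>i. X $$ (i,j)))"
      using bd1 by (intro sum_mono) (simp add: rayleigh_in_def)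
    finally show ?thesis .
  qed
  have rows: "\<alpha>2 * (frob X)\<^sup>2 \<le> (\<Sum>i<n1. quad_form n2 A2 (\<lambda>j. X $$ (i,j)))"
  proof -
    have "\<alpha>2 * (frob X)\<^sup>2 = (\<Sum>i<n1. \<alpha>2 * sq_norm n2 (\<lambda>j. X $$ (i,j)))"
      using X by (simp add: frob_sq_rows sum_distrib_left)
    also have "\<dots> \<le> (\<Sum>i<n1. quad_form n2 A2 (\<lambda>j. X $$ (i,j)))"
      using bd2 by (intro sum_mono) (simp add: rayleigh_in_def)
    finally show ?thesis .
  qed
  have entries: "?Y $$ (i,j) = (A1 * X) $$ (i,j) + (X * A2) $$ (i,j)" if "i < n1" "j < n2" for i j
    using that A1 A2 X by (simp del: index_mult_mat(1))
  have "(\<Sum>i<n1. \<Sum>j<n2. X $$ (i,j) * ?Y $$ (i,j))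
      = (\<Sum>i<n1. \<Sum>j<n2. X $$ (i,j) * (A1 * X) $$ (i,j)) + (\<Sum>i<n1. \<Sum>j<n2. X $$ (i,j) * (X * A2) $$ (i,j))"
    by (simp add: entries distrib_left sum.distrib del: index_mult_mat(1))
  also have "\<dots> = (\<Sum>j<n2. quad_form n1 A1 (\<lambda>i. X $$ (i,j))) + (\<Sum>i<n1. quad_form n2 A2 (\<lambda>j. X $$ (i,j)))"
    by (simp only: inner_mult_left[OF A1 X] inner_mult_right[OF A2 X])
  finally have inner: "(\<Sum>i<n1. \<Sum>j<n2. X $$ (i,j) * ?Y $$ (i,j))
      = (\<Sum>j<n2. quad_form n1 A1 (\<lambda>i. X $$ (i,j))) + (\<Sum>i<n1. quad_form n2 A2 (\<lambda>j. X $$ (i,j)))" .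
  have "(\<Sum>i<n1. \<Sum>j<n2. X $$ (i,j) * ?Y $$ (i,j)) \<le> frob X * frob ?Y"
    using A1 A2 X by (intro frob_inner_le) auto
  with cols rows inner have "frob X * ((\<alpha>1 + \<alpha>2) * frob X) \<le> frob X * frob ?Y"
    by (simp add: algebra_simps power2_eq_square)
  then show ?thesis
    using frob_nonneg[of X] frob_nonneg[of ?Y] by (cases "frob X = 0") auto
qed

section \<open>The error recursion\<close>

lemma one_plus_power_le:
  fixes y :: real
  assumes "0 \<le> y" and "real k * y \<le> 2"
  shows "(1 + y) ^ k \<le> 1 + 2 * real k"
proof (cases "k \<le> 3")
  case True
  show ?thesis
  proof (cases "k = 0")
    case False
    then have "y \<le> 2 / real k" using assms(2) by (simp add: field_simps)
    then have "(1 + y) ^ k \<le> (1 + 2 / real k) ^ k" using assms(1) by (intro power_mono) auto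
    also have "\<dots> \<le> 1 + 2 * real k"
    proof -
      from True False consider "k = 1" | "k = 2" | "k = 3" by linarith
      then show ?thesis by cases (simp_all add: power2_eq_square power3_eq_cube)
    qed
    finally show ?thesis .
  qed simp
next
  case False
  have "(1 + y) ^ k \<le> exp y ^ k" using assms(1) by (intro power_mono) auto
  also have "\<dots> = exp (real k * y)" by (simp add: exp_of_nat_mult)
  also have "\<dots> \<le> exp 2" using assms(2) by simp
  also have "exp (2::real) = exp 1 * exp 1" by (simp add: exp_add[symmetric])
  also have "\<dots> \<le> 3 * 3" using exp_le by (intro mult_mono) auto
  also have "\<dots> \<le> 1 + 2 * real k" using False by simp
  finally show ?thesis .
qed

lemma sum_odd_eq_square: "(\<Sum>k<n. 1 + 2 * real k) = (real n)\<^sup>2"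
  by (induction n) (simp_all add: power2_eq_square algebra_simps)

text \<open>Each factor \<open>(1 + x)\<^sup>k\<close> of the geometric sum is at most the odd number \<open>2k + 1\<close>.\<close>

lemma geometric_growth_le:
  fixes x :: real
  assumes "0 \<le> x" and "real l * x \<le> 2"
  shows "(1 + x) ^ (l + 1) - 1 \<le> (real l + 1)\<^sup>2 * x"
proof -
  have "(1 + x) ^ (l + 1) - 1 = x * (\<Sum>k<l + 1. (1 + x) ^ k)"
    using power_diff_1_eq[of "1 + x" "l + 1"] by simp
  also have "\<dots> \<le> x * (\<Sum>k<l + 1. 1 + 2 * real k)"
  proof (intro mult_left_mono sum_mono one_plus_power_le assms(1))
    fix k assume "k \<in> {..<l + 1}"
    then have "real k * x \<le> real l * x" using assms(1) by (intro mult_right_mono) auto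
    then show "real k * x \<le> 2" using assms(2) by linarith
  qed
  also have "\<dots> = (real l + 1)\<^sup>2 * x" by (simp only: sum_odd_eq_square) simp
  finally show ?thesis .
qed

lemma residual_recurrence_bound:
  fixes \<rho> \<xi> :: "nat \<Rightarrow> real" and b \<kappa> \<epsilon> :: real
  assumes \<rho>_nonneg: "\<And>h. 0 \<le> \<rho> h" and \<xi>_nonneg: "\<And>h. 0 \<le> \<xi> h"
    and "0 \<le> b" and "1 \<le> \<kappa>" and small: "real l * \<kappa> * \<epsilon> \<le> 2"
    and last: "\<rho> l \<le> \<epsilon> * b"
    and step: "\<And>h. h < l \<Longrightarrow> \<rho> h \<le> \<epsilon> * \<xi> h + \<rho> (Suc h)"
    and coupling: "\<And>h. h < l \<Longrightarrow> \<xi> h \<le> \<kappa> * (\<rho> (Suc h) + b)"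
  shows "\<rho> 0 \<le> (real l + 1)\<^sup>2 * \<kappa> * \<epsilon> * b"
proof -
  have growth: "\<rho> 0 \<le> ((1 + \<kappa> * e) ^ (l + 1) - 1) * b"
    if e: "0 \<le> e" and last_e: "\<rho> l \<le> e * b"
      and step_e: "\<And>h. h < l \<Longrightarrow> \<rho> h \<le> e * \<xi> h + \<rho> (Suc h)"
    for e
  proof -
    have "\<rho> h + b \<le> (1 + \<kappa> * e) ^ (l - h) * (\<rho> l + b)" if "h \<le> l" for h
      using that
    proof (induction h rule: inc_induct)
      case (step h)
      have "e * \<xi> h \<le> e * (\<kappa> * (\<rho> (Suc h) + b))"
        using coupling[OF step.hyps(2)] e by (rule mult_left_mono)
      then have "\<rho> h + b \<le> e * (\<kappa> * (\<rho> (Suc h) + b)) + \<rho> (Suc h) + b"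
        using step_e[OF step.hyps(2)] by linarith
      also have "\<dots> \<le> (1 + \<kappa> * e) * (\<rho> (Suc h) + b)" by (simp add: algebra_simps)
      also have "\<dots> \<le> (1 + \<kappa> * e) * ((1 + \<kappa> * e) ^ (l - Suc h) * (\<rho> l + b))"
        using step.IH \<open>1 \<le> \<kappa>\<close> e by (intro mult_left_mono) auto
      also have "\<dots> = (1 + \<kappa> * e) ^ (l - h) * (\<rho> l + b)"
      proof -
        have "l - h = Suc (l - Suc h)" using step.hyps(2) by simp
        then show ?thesis by (simp only: power_Suc mult.assoc)
      qed
      finally show ?case .
    qed simp
    from this[of 0] have "\<rho> 0 + b \<le> (1 + \<kappa> * e) ^ l * (\<rho> l + b)" by simp
    also have "\<dots> \<le> (1 + \<kappa> * e) ^ l * ((1 + \<kappa> * e) * b)"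
    proof (intro mult_left_mono)
      have "0 \<le> e * b" using e \<open>0 \<le> b\<close> by simp
      then have "1 * (e * b) \<le> \<kappa> * (e * b)" using \<open>1 \<le> \<kappa>\<close> by (intro mult_right_mono)
      with last_e show "\<rho> l + b \<le> (1 + \<kappa> * e) * b" by (simp add: algebra_simps)
    qed (use \<open>1 \<le> \<kappa>\<close> e in simp)
    finally show ?thesis by (simp add: algebra_simps)
  qed
  show ?thesis
  proof (cases "0 \<le> \<epsilon>")
    case True
    have "\<rho> 0 \<le> ((1 + \<kappa> * \<epsilon>) ^ (l + 1) - 1) * b" by (rule growth[OF True last step])
    also have "\<dots> \<le> (real l + 1)\<^sup>2 * (\<kappa> * \<epsilon>) * b"
      using geometric_growth_le[of "\<kappa> * \<epsilon>" l] True small \<open>1 \<le> \<kappa>\<close> \<open>0 \<le> b\<close>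
      by (intro mult_right_mono) (auto simp: mult.assoc)
    finally show ?thesis by (simp add: mult.assoc)
  next
    case False
    text \<open>A negative \<open>\<epsilon>\<close> forces \<open>b = 0\<close>, and the recursion then holds with \<open>\<epsilon> = 0\<close>.\<close>
    have "0 \<le> \<epsilon> * b" using last \<rho>_nonneg[of l] by linarith
    with False \<open>0 \<le> b\<close> have "b = 0" by (simp add: zero_le_mult_iff)
    have "\<rho> 0 \<le> ((1 + \<kappa> * 0) ^ (l + 1) - 1) * b"
    proof (rule growth)
      show "\<rho> l \<le> 0 * b" using last \<open>b = 0\<close> by simp
      show "\<rho> h \<le> 0 * \<xi> h + \<rho> (Suc h)" if "h < l" for h
      proof -
        have "\<epsilon> * \<xi> h \<le> 0" using False \<xi>_nonneg[of h] by (simp add: mult_nonpos_nonneg)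
        with step[OF that] show ?thesis by simp
      qed
    qed simp
    then show ?thesis using \<open>b = 0\<close> by simp
  qed
qed

section \<open>Residuals of the multilevel correction\<close>

text \<open>The paper's \<open>\<Xi>(h)\<close> is \<open>level_coupling (A\<^sub>1(h)) (A\<^sub>1(h+1)) (A\<^sub>2(h)) (A\<^sub>2(h+1)) (X(h+1))\<close>.\<close>

definition level_coupling :: "real mat \<Rightarrow> real mat \<Rightarrow> real mat \<Rightarrow> real mat \<Rightarrow> real mat \<Rightarrow> real mat" where
  "level_coupling a a' b b' X = - ((a - a') * X) - X * (b - b')"

lemma frob_residual_add_correction_le:
  assumes a: "a \<in> carrier_mat n1 n1" and a': "a' \<in> carrier_mat n1 n1"
    and b: "b \<in> carrier_mat n2 n2" and b': "b' \<in> carrier_mat n2 n2"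
    and d: "d \<in> carrier_mat n1 n2" and X: "X \<in> carrier_mat n1 n2" and B: "B \<in> carrier_mat n1 n2"
    and correction: "frob (a * d + d * b - level_coupling a a' b b' X)
      \<le> \<epsilon> * frob (level_coupling a a' b b' X)"
  shows "frob (a * (d + X) + (d + X) * b - B)
    \<le> \<epsilon> * frob (level_coupling a a' b b' X) + frob (a' * X + X * b' - B)"
proof -
  have split: "a * (d + X) + (d + X) * b - B
      = (a * d + d * b - level_coupling a a' b b' X) + (a' * X + X * b' - B)"
    unfolding level_coupling_def mult_add_distrib_mat[OF a d X] add_mult_distrib_mat[OF d X b]
      minus_mult_distrib_mat[OF a a' X] mult_minus_distrib_mat[OF X b b']
    using assms by (intro eq_matI) auto
  have "frob (a * (d + X) + (d + X) * b - B)
      \<le> frob (a * d + d * b - level_coupling a a' b b' X) + frob (a' * X + X * b' - B)"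
    unfolding split by (rule frob_add_le) (use assms in \<open>auto simp: level_coupling_def\<close>)
  with correction show ?thesis by linarith
qed

lemma frob_level_coupling_le:
  assumes a: "sym_rayleigh_in n1 a \<alpha>1 \<beta>1" and a': "sym_rayleigh_in n1 a' \<alpha>1 \<beta>1"
    and b: "sym_rayleigh_in n2 b \<alpha>2 \<beta>2" and b': "sym_rayleigh_in n2 b' \<alpha>2 \<beta>2"
    and X: "X \<in> carrier_mat n1 n2"
  shows "frob (level_coupling a a' b b' X) \<le> ((\<beta>1 - \<alpha>1) + (\<beta>2 - \<alpha>2)) * frob X"
proof -
  have "a - a' \<in> carrier_mat n1 n1" "b - b' \<in> carrier_mat n2 n2"
    using assms by (auto simp: sym_rayleigh_in_def)
  with X have "frob (level_coupling a a' b b' X) \<le> frob ((a - a') * X) + frob (X * (b - b'))"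
    using frob_diff_le[of "- ((a - a') * X)" n1 n2 "X * (b - b')"]
    by (simp add: level_coupling_def frob_uminus)
  also have "frob ((a - a') * X) \<le> (\<beta>1 - \<alpha>1) * frob X"
    by (rule frob_mult_left_le[OF sym_rayleigh_in_diff[OF a a'] X])
  also have "frob (X * (b - b')) \<le> (\<beta>2 - \<alpha>2) * frob X"
    by (rule frob_mult_right_le[OF sym_rayleigh_in_diff[OF b b'] X])
  finally show ?thesis by (simp add: algebra_simps)
qed

lemma frob_level_coupling_residual_le:
  assumes a: "sym_rayleigh_in n1 a \<alpha>1 \<beta>1" and a': "sym_rayleigh_in n1 a' \<alpha>1 \<beta>1"
    and b: "sym_rayleigh_in n2 b \<alpha>2 \<beta>2" and b': "sym_rayleigh_in n2 b' \<alpha>2 \<beta>2"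
    and X: "X \<in> carrier_mat n1 n2" and B: "B \<in> carrier_mat n1 n2"
    and \<alpha>1: "0 < \<alpha>1" and \<alpha>2: "0 < \<alpha>2" and \<beta>1: "\<alpha>1 \<le> \<beta>1" and \<beta>2: "\<alpha>2 \<le> \<beta>2"
  shows "frob (level_coupling a a' b b' X)
    \<le> (\<beta>1 + \<beta>2) / (\<alpha>1 + \<alpha>2) * (frob (a' * X + X * b' - B) + frob B)"
proof -
  have "frob (level_coupling a a' b b' X) \<le> ((\<beta>1 - \<alpha>1) + (\<beta>2 - \<alpha>2)) * frob X"
    by (rule frob_level_coupling_le[OF a a' b b' X])
  also have "\<dots> \<le> (\<beta>1 + \<beta>2) * frob X"
    using \<alpha>1 \<alpha>2 frob_nonneg[of X] by (intro mult_right_mono) auto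
  finally have coupling: "frob (level_coupling a a' b b' X) \<le> (\<beta>1 + \<beta>2) * frob X" .
  have "(\<alpha>1 + \<alpha>2) * frob X \<le> frob (a' * X + X * b')"
    using a' b' X by (intro frob_sylvester_lower) (auto simp: sym_rayleigh_in_def)
  also have "\<dots> \<le> frob (a' * X + X * b' - B) + frob B"
    using a' b' X B by (intro frob_le_diff_add[of _ n1 n2]) (auto simp: sym_rayleigh_in_def)
  finally have "frob X \<le> (frob (a' * X + X * b' - B) + frob B) / (\<alpha>1 + \<alpha>2)"
    using \<alpha>1 \<alpha>2 by (simp add: pos_le_divide_eq mult.commute)
  then have "(\<beta>1 + \<beta>2) * frob X \<le> (\<beta>1 + \<beta>2) * ((frob (a' * X + X * b' - B) + frob B) / (\<alpha>1 + \<alpha>2))"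
    using \<alpha>1 \<alpha>2 \<beta>1 \<beta>2 by (intro mult_left_mono) auto
  with coupling show ?thesis by simp
qed

lemma multilevel_residual_bound:
  fixes a b X d :: "nat \<Rightarrow> real mat"
  assumes a: "\<And>h. h \<le> l \<Longrightarrow> sym_rayleigh_in n1 (a h) \<alpha>1 \<beta>1"
    and b: "\<And>h. h \<le> l \<Longrightarrow> sym_rayleigh_in n2 (b h) \<alpha>2 \<beta>2"
    and \<alpha>1: "0 < \<alpha>1" and \<alpha>2: "0 < \<alpha>2"
    and X: "\<And>h. X h \<in> carrier_mat n1 n2" and d: "\<And>h. h < l \<Longrightarrow> d h \<in> carrier_mat n1 n2"
    and X_step: "\<And>h. h < l \<Longrightarrow> X h = d h + X (Suc h)"
    and B: "B \<in> carrier_mat n1 n2"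
    and last: "frob (a l * X l + X l * b l - B) \<le> \<epsilon> * frob B"
    and correction: "\<And>h. h < l \<Longrightarrow>
      frob (a h * d h + d h * b h - level_coupling (a h) (a (Suc h)) (b h) (b (Suc h)) (X (Suc h)))
        \<le> \<epsilon> * frob (level_coupling (a h) (a (Suc h)) (b h) (b (Suc h)) (X (Suc h)))"
    and small: "real l * ((\<beta>1 + \<beta>2) / (\<alpha>1 + \<alpha>2)) * \<epsilon> < 2"
  shows "frob (a 0 * X 0 + X 0 * b 0 - B) \<le> (real l + 1)\<^sup>2 * ((\<beta>1 + \<beta>2) / (\<alpha>1 + \<alpha>2)) * \<epsilon> * frob B"
proof (cases "n1 = 0 \<or> n2 = 0")
  case True
  have "a 0 * X 0 + X 0 * b 0 - B \<in> carrier_mat n1 n2"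
    using a[of 0] b[of 0] X[of 0] B by (auto simp: sym_rayleigh_in_def)
  with True B show ?thesis by (simp add: frob_empty[of _ n1 n2])
next
  case False
  have "\<alpha>1 \<le> \<beta>1" "\<alpha>2 \<le> \<beta>2"
    using a[of 0] b[of 0] False rayleigh_in_le by (auto simp: sym_rayleigh_in_def)
  then have "1 \<le> (\<beta>1 + \<beta>2) / (\<alpha>1 + \<alpha>2)" using \<alpha>1 \<alpha>2 by simp
  show ?thesis
  proof (rule residual_recurrence_bound[where \<rho> = "\<lambda>h. frob (a h * X h + X h * b h - B)"
        and \<xi> = "\<lambda>h. frob (level_coupling (a h) (a (Suc h)) (b h) (b (Suc h)) (X (Suc h)))"])
    show "real l * ((\<beta>1 + \<beta>2) / (\<alpha>1 + \<alpha>2)) * \<epsilon> \<le> 2" using small by simp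
    fix h assume "h < l"
    then have ah: "sym_rayleigh_in n1 (a h) \<alpha>1 \<beta>1" "sym_rayleigh_in n1 (a (Suc h)) \<alpha>1 \<beta>1"
      and bh: "sym_rayleigh_in n2 (b h) \<alpha>2 \<beta>2" "sym_rayleigh_in n2 (b (Suc h)) \<alpha>2 \<beta>2"
      using a b by auto
    show "frob (a h * X h + X h * b h - B)
      \<le> \<epsilon> * frob (level_coupling (a h) (a (Suc h)) (b h) (b (Suc h)) (X (Suc h)))
        + frob (a (Suc h) * X (Suc h) + X (Suc h) * b (Suc h) - B)"
      unfolding X_step[OF \<open>h < l\<close>] using ah bh d[OF \<open>h < l\<close>] X B correction[OF \<open>h < l\<close>]
      by (intro frob_residual_add_correction_le) (auto simp: sym_rayleigh_in_def)
    show "frob (level_coupling (a h) (a (Suc h)) (b h) (b (Suc h)) (X (Suc h)))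
      \<le> (\<beta>1 + \<beta>2) / (\<alpha>1 + \<alpha>2) * (frob (a (Suc h) * X (Suc h) + X (Suc h) * b (Suc h) - B) + frob B)"
      by (rule frob_level_coupling_residual_le[OF ah bh X B \<alpha>1 \<alpha>2 \<open>\<alpha>1 \<le> \<beta>1\<close> \<open>\<alpha>2 \<le> \<beta>2\<close>])
  qed (simp_all add: frob_nonneg last \<open>1 \<le> (\<beta>1 + \<beta>2) / (\<alpha>1 + \<alpha>2)\<close>)
qed

lemma foldr_add_carrier_mat:
  "set xs \<subseteq> carrier_mat n1 n2 \<Longrightarrow> foldr (+) xs (0\<^sub>m n1 n2) \<in> carrier_mat n1 n2"
  by (induction xs) auto

lemma add_foldr_upt:
  fixes Y :: "'a :: comm_monoid_add mat"
  assumes Y: "Y \<in> carrier_mat n1 n2" and D: "\<And>k. k < l \<Longrightarrow> D k \<in> carrier_mat n1 n2"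
  shows "Y + foldr (+) (map D [h..<l]) (0\<^sub>m n1 n2) \<in> carrier_mat n1 n2"
    and "h < l \<Longrightarrow> Y + foldr (+) (map D [h..<l]) (0\<^sub>m n1 n2)
      = D h + (Y + foldr (+) (map D [Suc h..<l]) (0\<^sub>m n1 n2))"
proof -
  have sums: "foldr (+) (map D [k..<l]) (0\<^sub>m n1 n2) \<in> carrier_mat n1 n2" for k
    using D by (intro foldr_add_carrier_mat) auto
  with Y show "Y + foldr (+) (map D [h..<l]) (0\<^sub>m n1 n2) \<in> carrier_mat n1 n2" by simp
  assume "h < l"
  with Y D[of h] sums[of "Suc h"] show "Y + foldr (+) (map D [h..<l]) (0\<^sub>m n1 n2)
      = D h + (Y + foldr (+) (map D [Suc h..<l]) (0\<^sub>m n1 n2))"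
    by (intro eq_matI) (auto simp: upt_conv_Cons add.left_commute)
qed

theorem lemma3p2:
  fixes n1 n2 l :: nat
    and P1 P2 :: "nat \<Rightarrow> nat set set"
    and A1 A2 B Xl :: "real mat"
    and dX :: "nat \<Rightarrow> real mat"
    and \<alpha>1 \<beta>1 \<alpha>2 \<beta>2 \<epsilon> :: real
  assumes P1: "nested_partition n1 l P1"
    and P2: "nested_partition n2 l P2"
    and A1: "spd n1 A1" and A2: "spd n2 A2"
    and \<alpha>1: "0 < \<alpha>1" and \<alpha>2: "0 < \<alpha>2"
    and spec1: "spec_in A1 \<alpha>1 \<beta>1" and spec2: "spec_in A2 \<alpha>2 \<beta>2"
    and B: "B \<in> carrier_mat n1 n2"
    and Xl: "Xl \<in> carrier_mat n1 n2"
    and dX: "\<And>h. h < l \<Longrightarrow> dX h \<in> carrier_mat n1 n2"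
    and Rl: "frob (blkdiag P1 l A1 * Xl + Xl * blkdiag P2 l A2 - B) \<le> \<epsilon> * frob B"
    and Rh: "\<And>h. h < l \<Longrightarrow>
       (let Xh1 = Xl + foldr (+) (map dX [Suc h..<l]) (0\<^sub>m n1 n2);
            Xi = - ((blkdiag P1 h A1 - blkdiag P1 (Suc h) A1) * Xh1)
                 - Xh1 * (blkdiag P2 h A2 - blkdiag P2 (Suc h) A2)
        in frob (blkdiag P1 h A1 * dX h + dX h * blkdiag P2 h A2 - Xi) \<le> \<epsilon> * frob Xi)"
    and small: "real l * ((\<beta>1 + \<beta>2) / (\<alpha>1 + \<alpha>2)) * \<epsilon> < 2"
  shows "frob (A1 * (Xl + foldr (+) (map dX [0..<l]) (0\<^sub>m n1 n2)) + (Xl + foldr (+) (map dX [0..<l]) (0\<^sub>m n1 n2)) * A2 - B)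
           \<le> (real l + 1)^2 * ((\<beta>1 + \<beta>2) / (\<alpha>1 + \<alpha>2)) * \<epsilon> * frob B"
proof -
  define X where "X h = Xl + foldr (+) (map dX [h..<l]) (0\<^sub>m n1 n2)" for h
  have "frob (blkdiag P1 0 A1 * X 0 + X 0 * blkdiag P2 0 A2 - B)
      \<le> (real l + 1)^2 * ((\<beta>1 + \<beta>2) / (\<alpha>1 + \<alpha>2)) * \<epsilon> * frob B"
  proof (rule multilevel_residual_bound[where a = "\<lambda>h. blkdiag P1 h A1" and b = "\<lambda>h. blkdiag P2 h A2"
        and X = X and d = dX])
    show "sym_rayleigh_in n1 (blkdiag P1 h A1) \<alpha>1 \<beta>1" if "h \<le> l" for h
      using P1 that A1 spec1 by (rule sym_rayleigh_in_blkdiag)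
    show "sym_rayleigh_in n2 (blkdiag P2 h A2) \<alpha>2 \<beta>2" if "h \<le> l" for h
      using P2 that A2 spec2 by (rule sym_rayleigh_in_blkdiag)
    show "X h \<in> carrier_mat n1 n2" for h
      unfolding X_def by (rule add_foldr_upt(1)[OF Xl dX])
    show "X h = dX h + X (Suc h)" if "h < l" for h
      unfolding X_def by (rule add_foldr_upt(2)[OF Xl dX that])
    show "frob (blkdiag P1 l A1 * X l + X l * blkdiag P2 l A2 - B) \<le> \<epsilon> * frob B"
      using Rl Xl by (simp add: X_def)
    show "frob (blkdiag P1 h A1 * dX h + dX h * blkdiag P2 h A2
        - level_coupling (blkdiag P1 h A1) (blkdiag P1 (Suc h) A1) (blkdiag P2 h A2) (blkdiag P2 (Suc h) A2) (X (Suc h)))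
      \<le> \<epsilon> * frob (level_coupling (blkdiag P1 h A1) (blkdiag P1 (Suc h) A1) (blkdiag P2 h A2) (blkdiag P2 (Suc h) A2) (X (Suc h)))"
      if "h < l" for h
      using Rh[OF that] by (simp add: Let_def X_def level_coupling_def)
  qed (use \<alpha>1 \<alpha>2 dX B small in auto)
  moreover have "blkdiag P1 0 A1 = A1" "blkdiag P2 0 A2 = A2"
    using blkdiag_level_0[OF P1] blkdiag_level_0[OF P2] A1 A2 by (auto simp: spd_def)
  ultimately show ?thesis by (simp add: X_def)
qed

end
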